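(* Let $U$ be a frame-acyclic molecule and $k\in\mathbb{N}$ with $\mathrm{frdim}\,U\le k\le\dim U-1$. Then every $k$-pre-ordering of $U$ is refined by a $k$-ordering of $U$.
   Context: Oriented graded posets: graded posets ($\dim x$ the grade) with, for each $x$, a partition of the elements covered by $x$ into $\partial^-x$ and $\partial^+x$. $\mathrm{cl}\{x\}$ is the downward closure. For closed $U$, $k\ge0$, $\partial_k^\alpha U$ is the downward closure of the $x\in U$ with either $\dim x=k$ and no $y\in U$ with $x\in\partial^{-\alpha}y$, or $x$ maximal with $\dim x<k$. Molecules: smallest isomorphism-closed class containing the point, closed under pasting $U\#_kV$ (pushout along $\partial_k^+U\cong\partial_k^-V$), and containing $U\Rightarrow V$ (pushout along $\partial_{m-1}U\cong\partial_{m-1}V$ plus a new top element with inputs the maximal elements of $U$, outputs those of $V$) for round $U,V$ of equal dimension $m$ with matching $(m-1)$-boundaries ($U$ round iff $\partial_{k-1}U=\partial_k^-U\cap\partial_k^+U$ for $k<\dim U$). Submolecules $V\sqsubseteq U$: smallest class of embeddings containing isomorphisms, closed under composition, containing $U\hookrightarrow U\#_kV\hookleftarrow V$. $\mathrm{frdim}\,V$ is the dimension of $\bigcup\{\mathrm{cl}\{x\}\cap\mathrm{cl}\{y\}:x\ne y\text{ maximal in }V\}$; for $k\ge-1$, $\mathcal{M}_kV$ is the directed graph whose vertices are the maximal elements of $V$ of dimension $>k$, with an edge $x\to y$ iff some $k$-dimensional element lies in $\partial_k^+\mathrm{cl}\{x\}\cap\partial_k^-\mathrm{cl}\{y\}$.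 $U$ is frame-acyclic if $\mathcal{M}_{\mathrm{frdim}W}W$ is acyclic for every $W\sqsubseteq U$. A linearly ordered partition of a set is a partition with a linear order $(E_1,\dots,E_m)$ of its classes. A $k$-pre-ordering of $U$ is a linearly ordered partition of the vertices of $\mathcal{M}_kU$ such that for every edge $x\to y$ the class of $x$ is $\le$ the class of $y$; a $k$-ordering is a $k$-pre-ordering all of whose classes are singletons. $L$ refines $K$ if each class of $K$ is the union of a block of consecutive classes of $L$, in order. *)

theory Defs
  imports Main
begin

datatype orient = Mn | Pl

fun opp :: "orient \<Rightarrow> orient" where
  "opp Mn = Pl" | "opp Pl = Mn"

text \<open>An oriented graded poset: a carrier set, the grading (dimension) and for each
  element its input (Mn) and output (Pl) faces; the order is generated by the faces.\<close>
record 'a ogpos =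
  elems :: "'a set"
  gdim :: "'a \<Rightarrow> nat"
  bd :: "orient \<Rightarrow> 'a \<Rightarrow> 'a set"

definition faces :: "('a, 'b) ogpos_scheme \<Rightarrow> 'a \<Rightarrow> 'a set" where
  "faces P x = bd P Mn x \<union> bd P Pl x"

definition ogpos :: "('a, 'b) ogpos_scheme \<Rightarrow> bool" where
  "ogpos P \<longleftrightarrow> (\<forall>x\<in>elems P.
      faces P x \<subseteq> elems P \<and> bd P Mn x \<inter> bd P Pl x = {} \<and>
      (\<forall>y\<in>faces P x. gdim P x = Suc (gdim P y)) \<and>
      (0 < gdim P x \<longrightarrow> faces P x \<noteq> {}))"

definition facerel :: "('a, 'b) ogpos_scheme \<Rightarrow> ('a \<times> 'a) set" where
  "facerel P = {(y, x). x \<in> elems P \<and> y \<in> faces P x}"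

definition cl :: "('a, 'b) ogpos_scheme \<Rightarrow> 'a set \<Rightarrow> 'a set" where
  "cl P A = {y \<in> elems P. \<exists>x \<in> A \<inter> elems P. (y, x) \<in> (facerel P)\<^sup>*}"

definition closed_in :: "('a, 'b) ogpos_scheme \<Rightarrow> 'a set \<Rightarrow> bool" where
  "closed_in P U \<longleftrightarrow> U \<subseteq> elems P \<and> cl P U = U"

definition maxel :: "('a, 'b) ogpos_scheme \<Rightarrow> 'a set \<Rightarrow> 'a set" where
  "maxel P U = {x \<in> U. \<forall>y \<in> U. (x, y) \<in> (facerel P)\<^sup>* \<longrightarrow> y = x}"

definition setdim :: "('a, 'b) ogpos_scheme \<Rightarrow> 'a set \<Rightarrow> int" where
  "setdim P U = (if U = {} then -1 else Max ((\<lambda>x. int (gdim P x)) ` U))"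

definition bdry :: "('a, 'b) ogpos_scheme \<Rightarrow> nat \<Rightarrow> orient \<Rightarrow> 'a set \<Rightarrow> 'a set" where
  "bdry P k \<alpha> U = cl P {x \<in> U.
      (gdim P x = k \<and> \<not> (\<exists>y \<in> U. x \<in> bd P (opp \<alpha>) y)) \<or>
      (x \<in> maxel P U \<and> gdim P x < k)}"

definition bdry_all :: "('a, 'b) ogpos_scheme \<Rightarrow> nat \<Rightarrow> 'a set \<Rightarrow> 'a set" where
  "bdry_all P k U = bdry P k Mn U \<union> bdry P k Pl U"

definition round_in :: "('a, 'b) ogpos_scheme \<Rightarrow> 'a set \<Rightarrow> bool" where
  "round_in P U \<longleftrightarrow> (\<forall>k::nat. int k < setdim P U \<longrightarrow>
      bdry P k Mn U \<inter> bdry P k Pl U = (if k = 0 then {} else bdry_all P (k - 1) U))"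

definition round :: "('a, 'b) ogpos_scheme \<Rightarrow> bool" where
  "round P \<longleftrightarrow> round_in P (elems P)"

definition emb :: "('a \<Rightarrow> 'c) \<Rightarrow> 'a ogpos \<Rightarrow> 'c ogpos \<Rightarrow> bool" where
  "emb f P Q \<longleftrightarrow> inj_on f (elems P) \<and> f ` elems P \<subseteq> elems Q \<and>
     (\<forall>x \<in> elems P. gdim Q (f x) = gdim P x \<and> (\<forall>\<alpha>. bd Q \<alpha> (f x) = f ` bd P \<alpha> x))"

definition iso :: "('a \<Rightarrow> 'c) \<Rightarrow> 'a ogpos \<Rightarrow> 'c ogpos \<Rightarrow> bool" where
  "iso f P Q \<longleftrightarrow> emb f P Q \<and> f ` elems P = elems Q"

text \<open>W (with the maps i, j) is a pasting \<open>U #_k V\<close>: the pushout of U and V along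
  an isomorphism \<open>\<partial>_k^+ U \<cong> \<partial>_k^- V\<close>.\<close>
definition is_pasting :: "nat \<Rightarrow> 'a ogpos \<Rightarrow> 'a ogpos \<Rightarrow> 'a ogpos \<Rightarrow> ('a \<Rightarrow> 'a) \<Rightarrow> ('a \<Rightarrow> 'a) \<Rightarrow> bool" where
  "is_pasting k U V W i j \<longleftrightarrow> emb i U W \<and> emb j V W \<and>
     elems W = i ` elems U \<union> j ` elems V \<and>
     i ` elems U \<inter> j ` elems V = i ` bdry U k Pl (elems U) \<and>
     i ` elems U \<inter> j ` elems V = j ` bdry V k Mn (elems V)"

definition lowbd :: "'a ogpos \<Rightarrow> orient \<Rightarrow> 'a set" where
  "lowbd U \<alpha> = (if setdim U (elems U) \<le> 0 then {}
                 else bdry U (nat (setdim U (elems U)) - 1) \<alpha> (elems U))"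

definition is_rewrite :: "'a ogpos \<Rightarrow> 'a ogpos \<Rightarrow> 'a ogpos \<Rightarrow> ('a \<Rightarrow> 'a) \<Rightarrow> ('a \<Rightarrow> 'a) \<Rightarrow> 'a \<Rightarrow> bool" where
  "is_rewrite U V W i j t \<longleftrightarrow> emb i U W \<and> emb j V W \<and>
     t \<notin> i ` elems U \<union> j ` elems V \<and>
     elems W = insert t (i ` elems U \<union> j ` elems V) \<and>
     i ` elems U \<inter> j ` elems V = i ` (lowbd U Mn \<union> lowbd U Pl) \<and>
     (\<forall>\<alpha>. i ` lowbd U \<alpha> = j ` lowbd V \<alpha>) \<and>
     gdim W t = Suc (nat (setdim U (elems U))) \<and>
     bd W Mn t = i ` maxel U (elems U) \<and>
     bd W Pl t = j ` maxel V (elems V)"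

inductive molecule :: "'a ogpos \<Rightarrow> bool" where
  point: "ogpos P \<Longrightarrow> elems P = {a} \<Longrightarrow> gdim P a = 0 \<Longrightarrow> molecule P"
| isom: "molecule P \<Longrightarrow> ogpos Q \<Longrightarrow> iso f P Q \<Longrightarrow> molecule Q"
| paste: "molecule U \<Longrightarrow> molecule V \<Longrightarrow> ogpos W \<Longrightarrow> is_pasting k U V W i j \<Longrightarrow> molecule W"
| rewr: "molecule U \<Longrightarrow> molecule V \<Longrightarrow> round U \<Longrightarrow> round V \<Longrightarrow>
         setdim U (elems U) = setdim V (elems V) \<Longrightarrow>
         ogpos W \<Longrightarrow> is_rewrite U V W i j t \<Longrightarrow> molecule W"

inductive subm :: "('a \<Rightarrow> 'a) \<Rightarrow> 'a ogpos \<Rightarrow> 'a ogpos \<Rightarrow> bool" where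
  sm_iso: "ogpos P \<Longrightarrow> ogpos Q \<Longrightarrow> iso f P Q \<Longrightarrow> subm f P Q"
| sm_comp: "subm f P Q \<Longrightarrow> subm g Q R \<Longrightarrow> subm (g \<circ> f) P R"
| sm_left: "molecule U \<Longrightarrow> molecule V \<Longrightarrow> ogpos W \<Longrightarrow> is_pasting k U V W i j \<Longrightarrow> subm i U W"
| sm_right: "molecule U \<Longrightarrow> molecule V \<Longrightarrow> ogpos W \<Longrightarrow> is_pasting k U V W i j \<Longrightarrow> subm j V W"

definition submol_set :: "'a ogpos \<Rightarrow> 'a set \<Rightarrow> bool" where
  "submol_set U W \<longleftrightarrow> closed_in U W \<and>
     (\<exists>f. subm f (U\<lparr>elems := W\<rparr>) U \<and> (\<forall>x \<in> W. f x = x))"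

definition frdim :: "('a, 'b) ogpos_scheme \<Rightarrow> 'a set \<Rightarrow> int" where
  "frdim P W = setdim P (\<Union>{cl P {x} \<inter> cl P {y} | x y.
      x \<in> maxel P W \<and> y \<in> maxel P W \<and> x \<noteq> y})"

definition Mvert :: "('a, 'b) ogpos_scheme \<Rightarrow> 'a set \<Rightarrow> int \<Rightarrow> 'a set" where
  "Mvert P W k = {x \<in> maxel P W. k < int (gdim P x)}"

definition Medge :: "('a, 'b) ogpos_scheme \<Rightarrow> 'a set \<Rightarrow> int \<Rightarrow> ('a \<times> 'a) set" where
  "Medge P W k = {(x, y). x \<in> Mvert P W k \<and> y \<in> Mvert P W k \<and>
      (\<exists>z. int (gdim P z) = k \<and>
           z \<in> bdry P (nat k) Pl (cl P {x}) \<inter> bdry P (nat k) Mn (cl P {y}))}"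

definition frame_acyclic :: "'a ogpos \<Rightarrow> bool" where
  "frame_acyclic U \<longleftrightarrow> (\<forall>W. submol_set U W \<longrightarrow> acyclic (Medge U W (frdim U W)))"

text \<open>linearly ordered partition of V, as a list of classes\<close>
definition lin_part :: "'a set list \<Rightarrow> 'a set \<Rightarrow> bool" where
  "lin_part Es V \<longleftrightarrow> (\<forall>E \<in> set Es. E \<noteq> {}) \<and>
     (\<forall>i < length Es. \<forall>j < length Es. i \<noteq> j \<longrightarrow> Es ! i \<inter> Es ! j = {}) \<and>
     \<Union>(set Es) = V"

definition k_pre_ordering :: "'a ogpos \<Rightarrow> nat \<Rightarrow> 'a set list \<Rightarrow> bool" where
  "k_pre_ordering U k Es \<longleftrightarrow> lin_part Es (Mvert U (elems U) (int k)) \<and>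
     (\<forall>x y i j. (x, y) \<in> Medge U (elems U) (int k) \<longrightarrow> i < length Es \<longrightarrow> j < length Es \<longrightarrow>
        x \<in> Es ! i \<longrightarrow> y \<in> Es ! j \<longrightarrow> i \<le> j)"

definition k_ordering :: "'a ogpos \<Rightarrow> nat \<Rightarrow> 'a set list \<Rightarrow> bool" where
  "k_ordering U k Es \<longleftrightarrow> k_pre_ordering U k Es \<and> (\<forall>E \<in> set Es. \<exists>x. E = {x})"

definition refines :: "'a set list \<Rightarrow> 'a set list \<Rightarrow> bool" where
  "refines L K \<longleftrightarrow> (\<exists>Ls. concat Ls = L \<and> length Ls = length K \<and>
     (\<forall>i < length K. K ! i = \<Union>(set (Ls ! i))))"

end

theory Submission
  imports Defs
begin

text \<open>Two distinct maximal elements joined by an edge of \<open>\<M>_k U\<close> share a \<open>k\<close>-dimensional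
  element, so \<open>k \<le> frdim U\<close>. Hence for \<open>k > frdim U\<close> the graph \<open>\<M>_k U\<close> has no edges apart from
  loops, while for \<open>k = frdim U\<close> it is acyclic because \<open>U \<sqsubseteq> U\<close> and \<open>U\<close> is frame-acyclic. An
  ordering refining a given pre-ordering is then obtained by topologically sorting each class
  separately and concatenating the results in the order of the classes.\<close>

lemma molecule_ogpos: "molecule U \<Longrightarrow> ogpos U"
  by (induction rule: molecule.induct) auto

lemma molecule_finite: "molecule U \<Longrightarrow> finite (elems U)"
proof (induction rule: molecule.induct)
  case (isom P Q f)
  then show ?case by (auto simp: iso_def dest: sym)
next
  case (paste U V W k i j)
  then show ?case by (simp add: is_pasting_def)
next
  case (rewr U V W i j t)
  then show ?case by (simp add: is_rewrite_def)
qed auto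

lemma submol_set_self:
  assumes "molecule U"
  shows "submol_set U (elems U)"
proof -
  have "closed_in U (elems U)"
    unfolding closed_in_def cl_def by auto
  moreover have "subm id U U"
    by (rule sm_iso) (auto simp: molecule_ogpos[OF assms] iso_def emb_def)
  ultimately show ?thesis
    unfolding submol_set_def by (auto intro!: exI[of _ id])
qed

lemma cl_subset_elems: "cl P A \<subseteq> elems P"
  unfolding cl_def by auto

lemma bdry_cl_subset: "bdry P n \<alpha> (cl P A) \<subseteq> cl P A"
  unfolding bdry_def cl_def by (auto intro: rtrancl_trans)

lemma setdim_upper: "finite A \<Longrightarrow> z \<in> A \<Longrightarrow> int (gdim P z) \<le> setdim P A"
  unfolding setdim_def by auto

lemma frdim_ge_if_Medge:
  assumes "finite (elems P)" and "(x, y) \<in> Medge P W (int k)" and "x \<noteq> y"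
  shows "int k \<le> frdim P W"
proof -
  obtain z where x: "x \<in> maxel P W" and y: "y \<in> maxel P W" and dim_z: "gdim P z = k"
    and z: "z \<in> bdry P k Pl (cl P {x}) \<inter> bdry P k Mn (cl P {y})"
    using assms(2) unfolding Medge_def Mvert_def by auto
  let ?A = "\<Union>{cl P {x} \<inter> cl P {y} | x y. x \<in> maxel P W \<and> y \<in> maxel P W \<and> x \<noteq> y}"
  have "finite ?A"
    by (rule finite_subset[OF _ assms(1)]) (use cl_subset_elems in fastforce)
  moreover have "z \<in> cl P {x} \<inter> cl P {y}"
    using z bdry_cl_subset[of P k Pl "{x}"] bdry_cl_subset[of P k Mn "{y}"] by blast
  then have "z \<in> ?A"
    using x y \<open>x \<noteq> y\<close> by blast
  ultimately have "int (gdim P z) \<le> setdim P ?A"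
    by (rule setdim_upper)
  then show ?thesis
    using dim_z unfolding frdim_def by simp
qed

lemma acyclic_Medge_above_frdim:
  assumes "molecule U" and "frame_acyclic U" and "frdim U (elems U) \<le> int k"
  shows "acyclic (Medge U (elems U) (int k) - Id)"
proof (cases "frdim U (elems U) = int k")
  case True
  then have "acyclic (Medge U (elems U) (int k))"
    using assms(2) submol_set_self[OF assms(1)] unfolding frame_acyclic_def by metis
  then show ?thesis
    by (rule acyclic_subset) blast
next
  case False
  have "Medge U (elems U) (int k) - Id = {}"
  proof (rule ccontr)
    assume "Medge U (elems U) (int k) - Id \<noteq> {}"
    then obtain x y where "(x, y) \<in> Medge U (elems U) (int k)" "x \<noteq> y"
      by auto
    then have "int k \<le> frdim U (elems U)"
      by (rule frdim_ge_if_Medge[OF molecule_finite[OF assms(1)]])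
    with False assms(3) show False
      by simp
  qed
  then show ?thesis
    by (metis acyclic_def empty_iff trancl_empty)
qed

definition may_precede :: "('a \<times> 'a) set \<Rightarrow> 'a \<Rightarrow> 'a \<Rightarrow> bool" where
  "may_precede R x y \<longleftrightarrow> x \<noteq> y \<and> (y, x) \<notin> R"

lemma sorted_wrt_concat:
  "sorted_wrt r (concat xss) \<longleftrightarrow>
     (\<forall>xs \<in> set xss. sorted_wrt r xs) \<and> sorted_wrt (\<lambda>xs ys. \<forall>x \<in> set xs. \<forall>y \<in> set ys. r x y) xss"
  by (induction xss) (auto simp: sorted_wrt_append)

lemma linear_extension_exists:
  assumes "finite E" and "acyclic (R - Id)"
  shows "\<exists>xs. set xs = E \<and> sorted_wrt (may_precede R) xs"
  using assms(1)
proof (induction E rule: finite_psubset_induct)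
  case (psubset E)
  show ?case
  proof (cases "E = {}")
    case True
    then show ?thesis by simp
  next
    case False
    then obtain x where "x \<in> E" by blast
    have "wf ((R - Id) \<inter> E \<times> E)"
      using psubset.hyps assms(2) by (intro finite_acyclic_wf) (auto intro: acyclic_subset)
    then obtain m where "m \<in> E" and m_min: "\<And>y. (y, m) \<in> (R - Id) \<inter> E \<times> E \<Longrightarrow> y \<notin> E"
      using wfE_min[OF _ \<open>x \<in> E\<close>] by metis
    obtain xs where xs: "set xs = E - {m}" "sorted_wrt (may_precede R) xs"
      using psubset.IH[of "E - {m}"] \<open>m \<in> E\<close> by blast
    have "\<forall>y \<in> set xs. may_precede R m y"
      using xs(1) m_min \<open>m \<in> E\<close> unfolding may_precede_def by blast
    then have "set (m # xs) = E \<and> sorted_wrt (may_precede R) (m # xs)"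
      using xs \<open>m \<in> E\<close> by auto
    then show ?thesis by blast
  qed
qed

lemma block_linear_extension_exists:
  assumes "\<forall>E \<in> set K. finite E" and "acyclic (R - Id)"
    and "sorted_wrt (\<lambda>E F. \<forall>x \<in> E. \<forall>y \<in> F. may_precede R x y) K"
  shows "\<exists>xss. map set xss = K \<and> sorted_wrt (may_precede R) (concat xss)"
proof -
  define ext where "ext E = (SOME xs. set xs = E \<and> sorted_wrt (may_precede R) xs)" for E
  have ext: "set (ext E) = E \<and> sorted_wrt (may_precede R) (ext E)" if "E \<in> set K" for E
    unfolding ext_def
    by (rule someI_ex) (use linear_extension_exists[OF _ assms(2)] assms(1) that in blast)
  then have "map set (map ext K) = K"
    by (simp add: map_idI)
  moreover have "sorted_wrt (\<lambda>E F. \<forall>x \<in> set (ext E). \<forall>y \<in> set (ext F). may_precede R x y) K"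
    using assms(3) by (rule sorted_wrt_mono_rel[rotated]) (simp add: ext)
  then have "sorted_wrt (may_precede R) (concat (map ext K))"
    unfolding sorted_wrt_concat sorted_wrt_map using ext by auto
  ultimately show ?thesis by blast
qed

lemma k_pre_ordering_blocks:
  assumes "k_pre_ordering U k K"
  shows "sorted_wrt (\<lambda>E F. \<forall>x \<in> E. \<forall>y \<in> F. may_precede (Medge U (elems U) (int k)) x y) K"
  unfolding sorted_wrt_iff_nth_less
proof (intro allI impI ballI)
  fix i j x y
  assume "i < j" "j < length K" "x \<in> K ! i" "y \<in> K ! j"
  moreover have "K ! i \<inter> K ! j = {}"
    using assms \<open>i < j\<close> \<open>j < length K\<close> unfolding k_pre_ordering_def lin_part_def by simp
  moreover have "(y, x) \<notin> Medge U (elems U) (int k)"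
    using assms \<open>i < j\<close> \<open>j < length K\<close> \<open>x \<in> K ! i\<close> \<open>y \<in> K ! j\<close>
    unfolding k_pre_ordering_def by (meson less_trans not_le)
  ultimately show "may_precede (Medge U (elems U) (int k)) x y"
    unfolding may_precede_def by blast
qed

lemma k_ordering_singletons:
  assumes "set xs = Mvert U (elems U) (int k)"
    and "sorted_wrt (may_precede (Medge U (elems U) (int k))) xs"
  shows "k_ordering U k (map (\<lambda>x. {x}) xs)"
proof -
  have "distinct xs"
    using assms(2) by (induction xs) (auto simp: may_precede_def)
  then have "lin_part (map (\<lambda>x. {x}) xs) (Mvert U (elems U) (int k))"
    using assms(1) by (auto simp: lin_part_def nth_eq_iff_index_eq)
  moreover have "i \<le> j"
    if "(xs ! i, xs ! j) \<in> Medge U (elems U) (int k)" "i < length xs" "j < length xs" for i j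
    using that sorted_wrt_nth_less[OF assms(2), of j i] by (force simp: may_precede_def)
  ultimately show ?thesis
    unfolding k_ordering_def k_pre_ordering_def by auto
qed

lemma refines_singletons: "refines (map (\<lambda>x. {x}) (concat xss)) (map set xss)"
  unfolding refines_def
  by (rule exI[of _ "map (map (\<lambda>x. {x})) xss"]) (auto simp: map_concat)

theorem mainTheorem13:
  fixes U :: "'a ogpos" and k :: nat and K :: "'a set list"
  assumes "molecule U"
    and "frame_acyclic U"
    and "frdim U (elems U) \<le> int k"
    and "int k \<le> setdim U (elems U) - 1"
    and "k_pre_ordering U k K"
  shows "\<exists>L. k_ordering U k L \<and> refines L K"
proof -
  let ?V = "Mvert U (elems U) (int k)"
  have classes: "\<Union>(set K) = ?V"
    using assms(5) unfolding k_pre_ordering_def lin_part_def by blast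
  have "finite ?V"
    using molecule_finite[OF assms(1)] by (rule rev_finite_subset) (auto simp: Mvert_def maxel_def)
  then have "\<forall>E \<in> set K. finite E"
    using classes by (metis Sup_upper finite_subset)
  then obtain xss where K: "map set xss = K"
    and sorted: "sorted_wrt (may_precede (Medge U (elems U) (int k))) (concat xss)"
    using block_linear_extension_exists acyclic_Medge_above_frdim[OF assms(1-3)]
      k_pre_ordering_blocks[OF assms(5)] by blast
  have "set (concat xss) = ?V"
    using classes K by auto
  then have "k_ordering U k (map (\<lambda>x. {x}) (concat xss))"
    using sorted by (rule k_ordering_singletons)
  then show ?thesis
    using refines_singletons[of xss] K by blast
qed

end
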